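(* Let $R\subseteq\mathbb{R}^2$ be open and let $f:R\to\mathbb{R}^2$ be a $C^1$ mapping such that its critical set $S$ is nowhere dense. Suppose that $C(f)$ has non-empty interior. Then the points $w$ with $\mathrm{Val}(f,w)=\infty$ are dense in the interior of $C(f)$.
   Context: Write $f=(u,v)$; $J_f=u_xv_y-u_yv_x$ and $S=\{z\in R: J_f(z)=0\}$. $C(f)$ is the set of finite points $\zeta\in\mathbb{R}^2$ for which there is a sequence $(z_n)\subset R$ converging to a point of $\partial R$ or with $|z_n|\to\infty$, such that $f(z_n)\to\zeta$. $\mathrm{Val}(f,w)$ is the number (possibly infinite) of distinct $z\in R$ with $f(z)=w$. *)

theory Defs
  imports "HOL-Analysis.Analysis"
begin

definition C1_on :: "(real \<times> real) set \<Rightarrow> (real \<times> real \<Rightarrow> real \<times> real) \<Rightarrow> bool" where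
  "C1_on R f \<longleftrightarrow> (\<exists>f' :: real \<times> real \<Rightarrow> (real \<times> real) \<Rightarrow>\<^sub>L (real \<times> real).
      (\<forall>z\<in>R. (f has_derivative blinfun_apply (f' z)) (at z)) \<and> continuous_on R f')"

definition jacobian :: "(real \<times> real \<Rightarrow> real \<times> real) \<Rightarrow> real \<times> real \<Rightarrow> real" where
  "jacobian f z = (let D = frechet_derivative f (at z);
                       ux = fst (D (1,0)); vx = snd (D (1,0));
                       uy = fst (D (0,1)); vy = snd (D (0,1))
                   in ux * vy - uy * vx)"

definition critical_set :: "(real \<times> real) set \<Rightarrow> (real \<times> real \<Rightarrow> real \<times> real) \<Rightarrow> (real \<times> real) set" where
  "critical_set R f = {z \<in> R. jacobian f z = 0}"

definition cluster_set :: "(real \<times> real) set \<Rightarrow> (real \<times> real \<Rightarrow> real \<times> real) \<Rightarrow> (real \<times> real) set" where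
  "cluster_set R f = {\<zeta>. \<exists>z :: nat \<Rightarrow> real \<times> real. (\<forall>n. z n \<in> R) \<and>
       ((\<exists>p\<in>frontier R. z \<longlonglongrightarrow> p) \<or> filterlim (\<lambda>n. norm (z n)) at_top sequentially) \<and>
       (\<lambda>n. f (z n)) \<longlonglongrightarrow> \<zeta>}"

definition val_infinite :: "(real \<times> real) set \<Rightarrow> (real \<times> real \<Rightarrow> real \<times> real) \<Rightarrow> real \<times> real \<Rightarrow> bool" where
  "val_infinite R f w \<longleftrightarrow> infinite {z \<in> R. f z = w}"

end

theory Submission
  imports Defs
begin

text \<open>At a regular point (one with nonvanishing Jacobian) f is an open map, by Sussmann's
  open mapping theorem, so the set P_n of values taken at least n times at regular points is
  open. If w in P_n lies in C(f), a sequence along which f tends to w eventually leaves a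
  compact neighbourhood of the n regular preimages of w; as regular points are dense, there is
  a regular point outside that neighbourhood whose value lies near w and therefore still has n
  preimages inside it. So every P_n is dense in the interior of C(f), and by Baire's theorem so
  is their intersection, whose points have infinite fibres.\<close>

lemma jacobian_eq:
  assumes "(f has_derivative L) (at z)"
  shows "jacobian f z = fst (L (1,0)) * snd (L (0,1)) - fst (L (0,1)) * snd (L (1,0))"
  using frechet_derivative_at[OF assms] by (simp add: jacobian_def Let_def)

lemma inj_linear_if_det_nonzero:
  fixes L :: "real \<times> real \<Rightarrow> real \<times> real"
  assumes "linear L" "L (1,0) = (ux, vx)" "L (0,1) = (uy, vy)" "ux * vy - uy * vx \<noteq> 0"
  shows "inj L"
  unfolding linear_injective_0[OF \<open>linear L\<close>]
proof (intro allI impI)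
  fix x :: "real \<times> real"
  assume "L x = 0"
  obtain a b where x: "x = (a, b)" by (cases x)
  have "L x = L (a *\<^sub>R (1,0) + b *\<^sub>R (0,1))" by (simp add: x)
  also have "\<dots> = (a * ux + b * uy, a * vx + b * vy)"
    using assms(2,3) by (simp only: linear_add[OF \<open>linear L\<close>] linear_scale[OF \<open>linear L\<close>]) simp
  finally have u: "a * ux + b * uy = 0" and v: "a * vx + b * vy = 0"
    using \<open>L x = 0\<close> by (simp_all add: prod_eq_iff)
  have "a * (ux * vy - uy * vx) = vy * (a * ux + b * uy) - uy * (a * vx + b * vy)"
    "b * (ux * vy - uy * vx) = ux * (a * vx + b * vy) - vx * (a * ux + b * uy)"
    by (simp_all add: algebra_simps)
  then have "a * (ux * vy - uy * vx) = 0" "b * (ux * vy - uy * vx) = 0"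
    using u v by simp_all
  then show "x = 0" using assms(4) by (simp add: x zero_prod_def)
qed

lemma interior_image_ball_if_jacobian_nonzero:
  assumes "open S" "continuous_on S f" "p \<in> S" "(f has_derivative L) (at p)"
    and "jacobian f p \<noteq> 0" "e > 0"
  shows "f p \<in> interior (f ` ball p e)"
proof -
  have "linear L" using assms(4) has_derivative_linear by blast
  moreover have "inj L"
    using assms(5) unfolding jacobian_eq[OF assms(4)]
    by (intro inj_linear_if_det_nonzero[OF \<open>linear L\<close> surjective_pairing surjective_pairing])
  ultimately obtain g where "linear g" "L \<circ> g = id"
    using linear_injective_imp_surjective linear_surjective_right_inverse by blast
  then have "f p \<in> interior (f ` (S \<inter> ball p e))"
    using assms(1-4,6)
    by (intro sussmann_open_mapping[of S f p L g]) (simp_all add: linear_conv_bounded_linear interior_open)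
  then show ?thesis
    using interior_mono[OF image_mono[OF Int_lower2]] by blast
qed

lemma C1_on_imp_continuous_on: "C1_on R f \<Longrightarrow> continuous_on R f"
  unfolding C1_on_def
  by (meson continuous_at_imp_continuous_on has_derivative_continuous)

lemma open_Diff_critical_set:
  assumes "open R" "C1_on R f"
  shows "open (R - critical_set R f)"
proof -
  obtain f' where der: "\<forall>z\<in>R. (f has_derivative blinfun_apply (f' z)) (at z)"
    and "continuous_on R f'"
    using assms(2) unfolding C1_on_def by blast
  define J where
    "J z = fst (f' z (1,0)) * snd (f' z (0,1)) - fst (f' z (0,1)) * snd (f' z (1,0))" for z
  have "continuous_on R J"
    unfolding J_def by (intro continuous_intros \<open>continuous_on R f'\<close>)
  then have "open (R \<inter> J -` (- {0}))"
    using assms(1) by (intro continuous_open_preimage) auto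
  moreover have "R - critical_set R f = R \<inter> J -` (- {0})"
    using der jacobian_eq unfolding critical_set_def J_def by auto
  ultimately show ?thesis by simp
qed

lemma subset_closure_Diff_if_nowhere_dense:
  assumes "open R" "interior (closure S) = {}"
  shows "R \<subseteq> closure (R - S)"
proof -
  have "closure (- S) = UNIV"
    using assms(2) interior_mono[OF closure_subset, of S] by (auto simp: closure_complement)
  then show ?thesis
    using open_Int_closure_subset[OF assms(1), of "- S"] by (simp add: Diff_eq)
qed

definition attained_n_times :: "'a set \<Rightarrow> ('a \<Rightarrow> 'b) \<Rightarrow> nat \<Rightarrow> 'b set" where
  "attained_n_times A f n = {w. \<exists>F. finite F \<and> card F = n \<and> F \<subseteq> {z \<in> A. f z = w}}"

lemma attained_n_times_0 [simp]: "attained_n_times A f 0 = UNIV"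
  unfolding attained_n_times_def by (auto intro: exI[of _ "{}"])

lemma attained_n_times_all_iff:
  "(\<forall>n. w \<in> attained_n_times A f n) \<longleftrightarrow> infinite {z \<in> A. f z = w}"
proof
  assume all: "\<forall>n. w \<in> attained_n_times A f n"
  show "infinite {z \<in> A. f z = w}"
  proof
    assume fin: "finite {z \<in> A. f z = w}"
    obtain F where F: "card F = Suc (card {z \<in> A. f z = w})" "F \<subseteq> {z \<in> A. f z = w}"
      using all unfolding attained_n_times_def by blast
    with card_mono[OF fin F(2)] show False by simp
  qed
next
  assume "infinite {z \<in> A. f z = w}"
  then show "\<forall>n. w \<in> attained_n_times A f n"
    unfolding attained_n_times_def using infinite_arbitrarily_large by blast
qed

lemma disjoint_cballs_in_open:
  fixes F :: "'a::metric_space set"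
  assumes "finite F" "F \<subseteq> A" "open A"
  obtains e where "\<forall>p\<in>F. e p > 0 \<and> cball p (e p) \<subseteq> A"
    and "disjoint_family_on (\<lambda>p. cball p (e p)) F"
proof -
  have radii: "\<forall>p\<in>F. \<exists>e>0. cball p e \<subseteq> A \<and> (\<forall>q\<in>F. q \<noteq> p \<longrightarrow> 3 * e \<le> dist p q)"
  proof
    fix p assume "p \<in> F"
    obtain d where d: "d > 0" "\<forall>q\<in>F. q \<noteq> p \<longrightarrow> d \<le> dist p q"
      using finite_set_avoid[OF assms(1)] by blast
    obtain r where r: "r > 0" "ball p r \<subseteq> A"
      using assms(2,3) \<open>p \<in> F\<close> openE by blast
    define e where "e = min (d/3) (r/2)"
    have "e > 0" using d(1) r(1) by (simp add: e_def)
    moreover have "cball p e \<subseteq> ball p r"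
      using r(1) by (auto simp: e_def)
    moreover have "\<forall>q\<in>F. q \<noteq> p \<longrightarrow> 3 * e \<le> dist p q"
      using d(2) by (auto simp: e_def min_def)
    ultimately show "\<exists>e>0. cball p e \<subseteq> A \<and> (\<forall>q\<in>F. q \<noteq> p \<longrightarrow> 3 * e \<le> dist p q)"
      using r(2) by blast
  qed
  obtain e where e: "\<forall>p\<in>F. e p > 0 \<and> cball p (e p) \<subseteq> A \<and>
      (\<forall>q\<in>F. q \<noteq> p \<longrightarrow> 3 * e p \<le> dist p q)"
    using bchoice[OF radii] by blast
  have disj: "disjoint_family_on (\<lambda>p. cball p (e p)) F"
    unfolding disjoint_family_on_def
  proof (intro ballI impI equals0I)
    fix p q assume "p \<in> F" "q \<in> F" "p \<noteq> q"
    fix x assume "x \<in> cball p (e p) \<inter> cball q (e q)"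
    then have "dist p q \<le> e p + e q"
      using dist_triangle2[of p q x] by simp
    moreover have "3 * e p \<le> dist p q" "3 * e q \<le> dist q p" "dist p q > 0"
      using e \<open>p \<in> F\<close> \<open>q \<in> F\<close> \<open>p \<noteq> q\<close> by auto
    ultimately show False by (simp add: dist_commute)
  qed
  have "\<forall>p\<in>F. e p > 0 \<and> cball p (e p) \<subseteq> A"
    using e by simp
  then show ?thesis using disj by (rule that)
qed

lemma fibre_persists_nearby:
  fixes f :: "'a::heine_borel \<Rightarrow> 'b::topological_space"
  assumes "open A" and open_at: "\<forall>p\<in>A. \<forall>e>0. f p \<in> interior (f ` ball p e)"
    and "finite F" "F \<subseteq> {z \<in> A. f z = w}"
  obtains K U where "compact K" "K \<subseteq> A" "open U" "w \<in> U"
    and "\<forall>y\<in>U. \<exists>G. finite G \<and> card G = card F \<and> G \<subseteq> {z \<in> K. f z = y}"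
proof -
  have "F \<subseteq> A" using assms(4) by blast
  obtain e where e: "\<forall>p\<in>F. e p > 0 \<and> cball p (e p) \<subseteq> A"
    and disj: "disjoint_family_on (\<lambda>p. cball p (e p)) F"
    by (rule disjoint_cballs_in_open[OF \<open>finite F\<close> \<open>F \<subseteq> A\<close> \<open>open A\<close>])
  define K where "K = (\<Union>p\<in>F. cball p (e p))"
  define U where "U = (\<Inter>p\<in>F. interior (f ` ball p (e p)))"
  have "\<exists>G. finite G \<and> card G = card F \<and> G \<subseteq> {z \<in> K. f z = y}" if "y \<in> U" for y
  proof -
    have "y \<in> f ` ball p (e p)" if "p \<in> F" for p
      using \<open>y \<in> U\<close> that interior_subset unfolding U_def by blast
    then have "\<forall>p\<in>F. \<exists>x. x \<in> ball p (e p) \<and> f x = y"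
      by blast
    then obtain g where g: "\<forall>p\<in>F. g p \<in> ball p (e p) \<and> f (g p) = y"
      using bchoice[of F "\<lambda>p x. x \<in> ball p (e p) \<and> f x = y"] by blast
    have "inj_on g F"
    proof (rule inj_onI)
      fix p q assume "p \<in> F" "q \<in> F" "g p = g q"
      have "g p \<in> cball p (e p) \<inter> cball q (e q)"
        using g \<open>p \<in> F\<close> \<open>q \<in> F\<close> \<open>g p = g q\<close> mem_ball_imp_mem_cball by fastforce
      then show "p = q"
        using disj \<open>p \<in> F\<close> \<open>q \<in> F\<close> unfolding disjoint_family_on_def by (metis empty_iff)
    qed
    moreover have "g ` F \<subseteq> {z \<in> K. f z = y}"
      using g unfolding K_def by (blast intro: mem_ball_imp_mem_cball)
    ultimately show ?thesis
      using \<open>finite F\<close> by (intro exI[of _ "g ` F"]) (simp add: card_image)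
  qed
  moreover have "compact K" unfolding K_def using \<open>finite F\<close> by auto
  moreover have "K \<subseteq> A" unfolding K_def using e by blast
  moreover have "open U" unfolding U_def using \<open>finite F\<close> by auto
  moreover have "w \<in> U" unfolding U_def using e assms(4) open_at by auto
  ultimately show ?thesis using that by blast
qed

lemma open_attained_n_times:
  fixes f :: "'a::heine_borel \<Rightarrow> 'b::topological_space"
  assumes "open A" "\<forall>p\<in>A. \<forall>e>0. f p \<in> interior (f ` ball p e)"
  shows "open (attained_n_times A f n)"
proof (subst open_subopen, intro ballI)
  fix w assume "w \<in> attained_n_times A f n"
  then obtain F where F: "finite F" "card F = n" "F \<subseteq> {z \<in> A. f z = w}"
    unfolding attained_n_times_def by blast
  obtain K U where "K \<subseteq> A" "open U" "w \<in> U"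
    and near: "\<forall>y\<in>U. \<exists>G. finite G \<and> card G = card F \<and> G \<subseteq> {z \<in> K. f z = y}"
    by (rule fibre_persists_nearby[OF assms F(1,3)])
  have "U \<subseteq> attained_n_times A f n"
  proof
    fix y assume "y \<in> U"
    then obtain G where "finite G" "card G = n" "G \<subseteq> {z \<in> K. f z = y}"
      using near F(2) by blast
    then show "y \<in> attained_n_times A f n"
      unfolding attained_n_times_def using \<open>K \<subseteq> A\<close> by blast
  qed
  then show "\<exists>U. open U \<and> w \<in> U \<and> U \<subseteq> attained_n_times A f n"
    using \<open>open U\<close> \<open>w \<in> U\<close> by blast
qed

text \<open>Sequences leaving every compact subset of R stand in for the sequences tending to the
  boundary of R or to infinity in the definition of C(f).\<close>
definition escaping_limits :: "'a::topological_space set \<Rightarrow> ('a \<Rightarrow> 'b::topological_space) \<Rightarrow> 'b set"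
  where "escaping_limits R f = {w. \<exists>s. (\<forall>k. s k \<in> R) \<and>
    (\<forall>K. compact K \<longrightarrow> K \<subseteq> R \<longrightarrow> (\<forall>\<^sub>F k in sequentially. s k \<notin> K)) \<and> (\<lambda>k. f (s k)) \<longlonglongrightarrow> w}"

lemma cluster_set_subset_escaping_limits:
  assumes "open R"
  shows "cluster_set R f \<subseteq> escaping_limits R f"
proof
  fix w assume "w \<in> cluster_set R f"
  then obtain s where s: "\<forall>k. s k \<in> R" "(\<lambda>k. f (s k)) \<longlonglongrightarrow> w"
    and escape: "(\<exists>p\<in>frontier R. s \<longlonglongrightarrow> p) \<or> filterlim (\<lambda>k. norm (s k)) at_top sequentially"
    unfolding cluster_set_def by blast
  have "\<forall>\<^sub>F k in sequentially. s k \<notin> K" if "compact K" "K \<subseteq> R" for K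
    using escape
  proof
    assume "\<exists>p\<in>frontier R. s \<longlonglongrightarrow> p"
    then obtain p where "p \<in> frontier R" "s \<longlonglongrightarrow> p" by blast
    moreover have "p \<in> - K"
      using \<open>p \<in> frontier R\<close> \<open>K \<subseteq> R\<close> assms by (auto simp: frontier_def interior_open)
    moreover have "open (- K)" using \<open>compact K\<close> by (simp add: compact_imp_closed open_Compl)
    ultimately show ?thesis using topological_tendstoD by fastforce
  next
    assume "filterlim (\<lambda>k. norm (s k)) at_top sequentially"
    moreover obtain B where "\<forall>x\<in>K. norm x \<le> B"
      using compact_imp_bounded[OF \<open>compact K\<close>] bounded_iff by blast
    ultimately have "\<forall>\<^sub>F k in sequentially. B < norm (s k)"
      unfolding filterlim_at_top_dense by blast
    then show ?thesis
      by (rule eventually_mono) (use \<open>\<forall>x\<in>K. norm x \<le> B\<close> in force)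
  qed
  then show "w \<in> escaping_limits R f" using s unfolding escaping_limits_def by blast
qed

lemma escaping_limit_approached_off_compact:
  fixes f :: "'a::t2_space \<Rightarrow> 'b::topological_space"
  assumes "open R" "continuous_on R f" "R \<subseteq> closure A" "w \<in> escaping_limits R f"
    and "compact K" "K \<subseteq> R" "open W" "w \<in> W"
  obtains x where "x \<in> A" "x \<notin> K" "f x \<in> W"
proof -
  obtain s where s: "\<forall>k. s k \<in> R" "(\<lambda>k. f (s k)) \<longlonglongrightarrow> w"
    and escape: "\<forall>K. compact K \<longrightarrow> K \<subseteq> R \<longrightarrow> (\<forall>\<^sub>F k in sequentially. s k \<notin> K)"
    using assms(4) unfolding escaping_limits_def by blast
  have "\<forall>\<^sub>F k in sequentially. s k \<notin> K"
    using escape assms(5,6) by blast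
  moreover have "\<forall>\<^sub>F k in sequentially. f (s k) \<in> W"
    using s(2) assms(7,8) by (rule topological_tendstoD)
  ultimately have "\<forall>\<^sub>F k in sequentially. s k \<notin> K \<and> f (s k) \<in> W"
    by (rule eventually_conj)
  then obtain k where "s k \<notin> K" "f (s k) \<in> W"
    using eventually_happens'[OF sequentially_bot] by blast
  define B where "B = R \<inter> f -` W - K"
  have "open B"
    unfolding B_def using assms(1,2,5,7)
    by (intro open_Diff continuous_open_preimage compact_imp_closed)
  moreover have "s k \<in> B \<inter> closure A"
    unfolding B_def using s(1) \<open>s k \<notin> K\<close> \<open>f (s k) \<in> W\<close> assms(3) by blast
  ultimately have "B \<inter> A \<noteq> {}"
    using open_Int_closure_eq_empty by blast
  then show ?thesis using that unfolding B_def by blast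
qed

lemma escaping_limit_in_closure_attained_Suc:
  fixes f :: "'a::heine_borel \<Rightarrow> 'b::topological_space"
  assumes "open R" "continuous_on R f" "open A" "A \<subseteq> R" "R \<subseteq> closure A"
    and open_at: "\<forall>p\<in>A. \<forall>e>0. f p \<in> interior (f ` ball p e)"
    and "w \<in> attained_n_times A f n" "w \<in> escaping_limits R f"
  shows "w \<in> closure (attained_n_times A f (Suc n))"
proof -
  obtain F where F: "finite F" "card F = n" "F \<subseteq> {z \<in> A. f z = w}"
    using assms(7) unfolding attained_n_times_def by blast
  obtain K U where K: "compact K" "K \<subseteq> A" and "open U" "w \<in> U"
    and near: "\<forall>y\<in>U. \<exists>G. finite G \<and> card G = card F \<and> G \<subseteq> {z \<in> K. f z = y}"
    by (rule fibre_persists_nearby[OF assms(3) open_at F(1,3)])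
  have "K \<subseteq> R" using K(2) assms(4) by blast
  have "V \<inter> attained_n_times A f (Suc n) \<noteq> {}" if V: "open V" "w \<in> V" for V
  proof -
    obtain x where x: "x \<in> A" "x \<notin> K" "f x \<in> V \<inter> U"
      by (rule escaping_limit_approached_off_compact[OF assms(1,2,5,8) K(1) \<open>K \<subseteq> R\<close>, of "V \<inter> U"])
        (use V \<open>open U\<close> \<open>w \<in> U\<close> in auto)
    then obtain G where G: "finite G" "card G = n" "G \<subseteq> {z \<in> K. f z = f x}"
      using near F(2) by blast
    have "x \<notin> G" using G(3) x(2) by blast
    then have "insert x G \<subseteq> {z \<in> A. f z = f x}" "card (insert x G) = Suc n"
      using G x(1) K(2) by auto
    then have "f x \<in> attained_n_times A f (Suc n)"
      unfolding attained_n_times_def using G(1) by blast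
    with x(3) show ?thesis by blast
  qed
  then show ?thesis unfolding closure_iff_nhds_not_empty by blast
qed

lemma dense_attained_n_times:
  fixes f :: "'a::heine_borel \<Rightarrow> 'b::topological_space"
  assumes "open R" "continuous_on R f" "open A" "A \<subseteq> R" "R \<subseteq> closure A"
    and "\<forall>p\<in>A. \<forall>e>0. f p \<in> interior (f ` ball p e)"
    and "open D" "D \<subseteq> escaping_limits R f"
  shows "D \<subseteq> closure (D \<inter> attained_n_times A f n)"
proof (induction n)
  case 0
  show ?case using closure_subset by simp
next
  case (Suc n)
  have "D \<inter> attained_n_times A f n \<subseteq> closure (D \<inter> attained_n_times A f (Suc n))"
  proof
    fix w assume "w \<in> D \<inter> attained_n_times A f n"
    then have "w \<in> D \<inter> closure (attained_n_times A f (Suc n))"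
      using escaping_limit_in_closure_attained_Suc[OF assms(1-6)] assms(8) by blast
    then show "w \<in> closure (D \<inter> attained_n_times A f (Suc n))"
      using open_Int_closure_subset[OF assms(7)] by blast
  qed
  then have "closure (D \<inter> attained_n_times A f n) \<subseteq> closure (D \<inter> attained_n_times A f (Suc n))"
    by (rule closure_minimal) simp
  with Suc.IH show ?case by blast
qed

lemma Baire_open_subset:
  fixes D :: "'a::{real_normed_vector,heine_borel} set"
  assumes "open D" "\<And>n::nat. open (P n)" "\<And>n. D \<subseteq> closure (D \<inter> P n)"
  shows "D \<subseteq> closure (D \<inter> (\<Inter>n. P n))"
proof
  fix x assume "x \<in> D"
  then obtain r where "r > 0" "cball x r \<subseteq> D"
    using assms(1) open_contains_cball by blast
  have "cball x r \<subseteq> closure (\<Inter>(range (\<lambda>n. cball x r \<inter> P n)))"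
  proof (rule Baire)
    fix T assume "T \<in> range (\<lambda>n. cball x r \<inter> P n)"
    then obtain n where T: "T = cball x r \<inter> P n" by blast
    have "ball x r \<subseteq> ball x r \<inter> closure (D \<inter> P n)"
      using assms(3) \<open>cball x r \<subseteq> D\<close> ball_subset_cball by blast
    also have "\<dots> \<subseteq> closure (ball x r \<inter> (D \<inter> P n))"
      by (rule open_Int_closure_subset) simp
    also have "\<dots> \<subseteq> closure T"
      unfolding T by (rule closure_mono) (use ball_subset_cball in blast)
    finally have "cball x r \<subseteq> closure T"
      using closure_minimal[OF _ closed_closure] closure_ball[OF \<open>r > 0\<close>] by metis
    then show "openin (top_of_set (cball x r)) T \<and> cball x r \<subseteq> closure T"
      unfolding T using assms(2) by blast
  qed auto
  also have "\<dots> \<subseteq> closure (D \<inter> (\<Inter>n. P n))"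
    using \<open>cball x r \<subseteq> D\<close> by (intro closure_mono) blast
  finally show "x \<in> closure (D \<inter> (\<Inter>n. P n))"
    using \<open>r > 0\<close> by (meson centre_in_cball less_imp_le subsetD)
qed

lemma dense_infinite_fibres:
  fixes f :: "'a::heine_borel \<Rightarrow> 'b::{real_normed_vector,heine_borel}"
  assumes "open R" "continuous_on R f" "open A" "A \<subseteq> R" "R \<subseteq> closure A"
    and "\<forall>p\<in>A. \<forall>e>0. f p \<in> interior (f ` ball p e)"
    and "open D" "D \<subseteq> escaping_limits R f"
  shows "D \<subseteq> closure {w \<in> D. infinite {z \<in> R. f z = w}}"
proof -
  have "D \<subseteq> closure (D \<inter> (\<Inter>n. attained_n_times A f n))"
    using open_attained_n_times[OF assms(3,6)] dense_attained_n_times[OF assms]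
    by (intro Baire_open_subset[OF assms(7)])
  also have "\<dots> \<subseteq> closure {w \<in> D. infinite {z \<in> R. f z = w}}"
  proof (rule closure_mono)
    have "infinite {z \<in> R. f z = w}" if "\<forall>n. w \<in> attained_n_times A f n" for w
    proof -
      have "infinite {z \<in> A. f z = w}" using that by (simp add: attained_n_times_all_iff)
      then show ?thesis by (rule infinite_super[rotated]) (use assms(4) in blast)
    qed
    then show "D \<inter> (\<Inter>n. attained_n_times A f n) \<subseteq> {w \<in> D. infinite {z \<in> R. f z = w}}"
      by blast
  qed
  finally show ?thesis .
qed

theorem theorem3p9:
  fixes R :: "(real \<times> real) set" and f :: "real \<times> real \<Rightarrow> real \<times> real"
  assumes "open R"
    and "C1_on R f"
    and "interior (closure (critical_set R f)) = {}"
    and "interior (cluster_set R f) \<noteq> {}"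
  shows "interior (cluster_set R f) \<subseteq> closure {w \<in> interior (cluster_set R f). val_infinite R f w}"
proof -
  define A where "A = R - critical_set R f"
  obtain f' where der: "\<forall>z\<in>R. (f has_derivative blinfun_apply (f' z)) (at z)"
    using assms(2) unfolding C1_on_def by blast
  have cont: "continuous_on R f" using C1_on_imp_continuous_on[OF assms(2)] .
  have "open A" unfolding A_def using open_Diff_critical_set[OF assms(1,2)] .
  moreover have "R \<subseteq> closure A"
    unfolding A_def using subset_closure_Diff_if_nowhere_dense[OF assms(1,3)] .
  moreover have "\<forall>p\<in>A. \<forall>e>0. f p \<in> interior (f ` ball p e)"
    using interior_image_ball_if_jacobian_nonzero[OF assms(1) cont] der
    unfolding A_def critical_set_def by blast
  moreover have "interior (cluster_set R f) \<subseteq> escaping_limits R f"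
    using cluster_set_subset_escaping_limits[OF assms(1)] interior_subset by blast
  ultimately show ?thesis
    unfolding val_infinite_def
    using dense_infinite_fibres[OF assms(1) cont, of A "interior (cluster_set R f)"]
    by (simp add: A_def)
qed

end
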